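(* Let $\{\alpha_{n,m}\in k^\times:n\in\mathbb{Z},m\in\mathbb{N}\}$ be a family of nonzero scalars and let $\phi:H\to H$ be the linear map with $\phi(x^ny^m)=\alpha_{n,m}x^ny^m$ for all $n\in\mathbb{Z}$, $m\in\mathbb{N}$. Then $\phi$ is a coalgebra automorphism of $H$ if and only if $\alpha_{n,m}=\alpha_{n,i}\alpha_{n+i,m-i}$ for all $n\in\mathbb{Z}$, $m\in\mathbb{N}$ and $0\leq i\leq m$.
   Context: Let $k$ be a field and $0\neq q\in k$ not a root of unity. $H=k_q[x,x^{-1},y]$ is the $k$-algebra generated by $x,x^{-1},y$ with $xx^{-1}=x^{-1}x=1$, $yx=qxy$, a Hopf algebra with $\Delta(x)=x\otimes x$, $\Delta(x^{-1})=x^{-1}\otimes x^{-1}$, $\Delta(y)=y\otimes x+1\otimes y$, $\varepsilon(x)=1$, $\varepsilon(y)=0$; $\{x^ny^m:n\in\mathbb{Z},m\in\mathbb{N}\}$ is a $k$-basis, and $\Delta(x^ny^m)=\sum_{i=0}^m\binom{m}{i}_qx^ny^i\otimes x^{n+i}y^{m-i}$ with $q$-binomial coefficients $\binom{m}{i}_q$. *)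

theory Defs
  imports Main "HOL-Library.Poly_Mapping"
begin

text \<open>The quantum plane H = k_q[x,x^-1,y] as a k-vector space: finitely supported
  coefficient functions on its basis x^n y^m, indexed by (n,m) :: int * nat.
  H tensor H is identified with finitely supported functions on pairs of basis
  indices (its standard basis of elementary tensors).\<close>

type_synonym 'k qH = "(int \<times> nat) \<Rightarrow>\<^sub>0 'k"
type_synonym 'k qHH = "((int \<times> nat) \<times> (int \<times> nat)) \<Rightarrow>\<^sub>0 'k"

definition smultH :: "'k::field \<Rightarrow> ('b \<Rightarrow>\<^sub>0 'k) \<Rightarrow> ('b \<Rightarrow>\<^sub>0 'k)" where
  "smultH c h = (\<Sum>b\<in>Poly_Mapping.keys h. Poly_Mapping.single b (c * Poly_Mapping.lookup h b))"

definition bas :: "int \<Rightarrow> nat \<Rightarrow> 'k::field qH" where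
  "bas n m = Poly_Mapping.single (n, m) 1"

definition tens :: "'k::field qH \<Rightarrow> 'k qH \<Rightarrow> 'k qHH" where
  "tens u v = (\<Sum>a\<in>Poly_Mapping.keys u. \<Sum>b\<in>Poly_Mapping.keys v. Poly_Mapping.single (a, b) (Poly_Mapping.lookup u a * Poly_Mapping.lookup v b))"

definition tmap :: "('k::field qH \<Rightarrow> 'k qH) \<Rightarrow> ('k qH \<Rightarrow> 'k qH) \<Rightarrow> 'k qHH \<Rightarrow> 'k qHH" where
  "tmap f g T = (\<Sum>p\<in>Poly_Mapping.keys T. smultH (Poly_Mapping.lookup T p)
       (tens (f (Poly_Mapping.single (fst p) 1)) (g (Poly_Mapping.single (snd p) 1))))"

fun qbinom :: "'k::field \<Rightarrow> nat \<Rightarrow> nat \<Rightarrow> 'k" where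
  "qbinom q 0 i = (if i = 0 then 1 else 0)"
| "qbinom q (Suc m) 0 = 1"
| "qbinom q (Suc m) (Suc i) = qbinom q m i + q ^ Suc i * qbinom q m (Suc i)"

definition Delta_bas :: "'k::field \<Rightarrow> int \<Rightarrow> nat \<Rightarrow> 'k qHH" where
  "Delta_bas q n m = (\<Sum>i\<in>{0..m}. smultH (qbinom q m i) (tens (bas n i) (bas (n + int i) (m - i))))"

definition Delta :: "'k::field \<Rightarrow> 'k qH \<Rightarrow> 'k qHH" where
  "Delta q h = (\<Sum>b\<in>Poly_Mapping.keys h. smultH (Poly_Mapping.lookup h b) (Delta_bas q (fst b) (snd b)))"

definition eps :: "'k::field qH \<Rightarrow> 'k" where
  "eps h = (\<Sum>b\<in>Poly_Mapping.keys h. if snd b = 0 then Poly_Mapping.lookup h b else 0)"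

definition linearH :: "('k::field qH \<Rightarrow> 'k qH) \<Rightarrow> bool" where
  "linearH f \<longleftrightarrow> (\<forall>u v. f (u + v) = f u + f v) \<and> (\<forall>c u. f (smultH c u) = smultH c (f u))"

definition coalg_aut :: "'k::field \<Rightarrow> ('k qH \<Rightarrow> 'k qH) \<Rightarrow> bool" where
  "coalg_aut q f \<longleftrightarrow> linearH f \<and> bij f \<and>
     (\<forall>h. Delta q (f h) = tmap f f (Delta q h)) \<and> (\<forall>h. eps (f h) = eps h)"

definition diagmap :: "(int \<times> nat \<Rightarrow> 'k::field) \<Rightarrow> 'k qH \<Rightarrow> 'k qH" where
  "diagmap \<alpha> h = (\<Sum>b\<in>Poly_Mapping.keys h. Poly_Mapping.single b (\<alpha> b * Poly_Mapping.lookup h b))"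

end

theory Submission imports Defs begin

text \<open>Both sides of the comultiplicativity condition for the diagonal map are diagonal in the
  basis of elementary tensors: the coefficient of x^a y^i \<otimes> x^(a+i) y^j is
  [i+j choose i]_q \<alpha>(a,i+j) for \<Delta>\<phi> and [i+j choose i]_q \<alpha>(a,i) \<alpha>(a+i,j) for (\<phi>\<otimes>\<phi>)\<Delta>.
  Since q is not a root of unity, the Gaussian binomials never vanish in the range 0 \<le> i \<le> m
  (absorption identity [m+1 choose k+1](1-q^(k+1)) = (1-q^(m+1))[m choose k]), so the two
  maps agree exactly when \<alpha> satisfies the cocycle identity. The cocycle identity also forces
  \<alpha>(n,0) = 1, which gives compatibility with the counit; bijectivity holds since all \<alpha> are
  nonzero.\<close>

lemma sum_keys_lookup_single:
  "(\<Sum>b\<in>Poly_Mapping.keys h. Poly_Mapping.lookup (Poly_Mapping.single b (f b)) x) =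
    (if x \<in> Poly_Mapping.keys h then f x else 0)"
  by (simp add: lookup_single Poly_Mapping.when_def if_distrib sum.If_cases)

lemma lookup_smultH [simp]: "Poly_Mapping.lookup (smultH c h) b = c * Poly_Mapping.lookup h b"
  unfolding smultH_def lookup_sum sum_keys_lookup_single by (auto simp: in_keys_iff)

lemma lookup_diagmap [simp]: "Poly_Mapping.lookup (diagmap \<alpha> h) b = \<alpha> b * Poly_Mapping.lookup h b"
  unfolding diagmap_def lookup_sum sum_keys_lookup_single by (auto simp: in_keys_iff)

lemma lookup_tens [simp]:
  "Poly_Mapping.lookup (tens u v) (a, b) = Poly_Mapping.lookup u a * Poly_Mapping.lookup v b"
proof -
  have "Poly_Mapping.lookup (tens u v) (a, b) =
      (\<Sum>a'\<in>Poly_Mapping.keys u. if a' = a then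
         (\<Sum>b'\<in>Poly_Mapping.keys v. if b' = b then Poly_Mapping.lookup u a * Poly_Mapping.lookup v b' else 0)
       else 0)"
    unfolding tens_def lookup_sum by (intro sum.cong refl) (auto simp: lookup_single Poly_Mapping.when_def)
  also have "\<dots> = Poly_Mapping.lookup u a * Poly_Mapping.lookup v b"
    by (simp only: sum.delta finite_keys) (auto simp: in_keys_iff)
  finally show ?thesis .
qed

lemma lookup_tmap_diagmap:
  "Poly_Mapping.lookup (tmap (diagmap \<alpha>) (diagmap \<alpha>) T) (a, b) = \<alpha> a * \<alpha> b * Poly_Mapping.lookup T (a, b)"
proof -
  have "Poly_Mapping.lookup (tmap (diagmap \<alpha>) (diagmap \<alpha>) T) (a, b) =
      (\<Sum>p\<in>Poly_Mapping.keys T. if p = (a, b) then \<alpha> a * \<alpha> b * Poly_Mapping.lookup T (a, b) else 0)"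
    unfolding tmap_def lookup_sum
    by (intro sum.cong refl) (auto simp: lookup_single Poly_Mapping.when_def prod_eq_iff)
  also have "\<dots> = \<alpha> a * \<alpha> b * Poly_Mapping.lookup T (a, b)"
    by (auto simp: in_keys_iff)
  finally show ?thesis .
qed

lemma lookup_Delta_bas:
  "Poly_Mapping.lookup (Delta_bas q n m) ((a, i), (c, j)) =
    (if a = n \<and> i + j = m \<and> c = n + int i then qbinom q m i else 0)"
proof -
  have "Poly_Mapping.lookup (Delta_bas q n m) ((a, i), (c, j)) =
      (\<Sum>i'\<in>{0..m}. if i' = i then (if a = n \<and> i + j = m \<and> c = n + int i then qbinom q m i else 0) else 0)"
    unfolding Delta_bas_def lookup_sum
    by (intro sum.cong refl) (auto simp: bas_def lookup_single Poly_Mapping.when_def)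
  then show ?thesis by auto
qed

lemma lookup_Delta:
  "Poly_Mapping.lookup (Delta q h) ((a, i), (c, j)) =
    (if c = a + int i then qbinom q (i + j) i * Poly_Mapping.lookup h (a, i + j) else 0)"
proof -
  have "Poly_Mapping.lookup (Delta q h) ((a, i), (c, j)) =
      (\<Sum>b\<in>Poly_Mapping.keys h. if b = (a, i + j) then
         (if c = a + int i then qbinom q (i + j) i * Poly_Mapping.lookup h (a, i + j) else 0) else 0)"
    unfolding Delta_def lookup_sum by (intro sum.cong refl) (auto simp: lookup_Delta_bas)
  then show ?thesis by (auto simp: in_keys_iff)
qed

lemma qbinom_eq_0: "m < i \<Longrightarrow> qbinom q m i = 0"
  by (induction q m i rule: qbinom.induct) auto

lemma qbinom_diag [simp]: "qbinom q m m = 1"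
  by (induction m) (auto simp: qbinom_eq_0)

lemma qbinom_0_right [simp]: "qbinom q m 0 = 1"
  by (cases m) auto

lemma qbinom_Suc_Suc_dual:
  "k \<le> m \<Longrightarrow> qbinom q (Suc m) (Suc k) = q ^ (m - k) * qbinom q m k + qbinom q m (Suc k)"
proof (induction m arbitrary: k)
  case 0
  then show ?case by simp
next
  case (Suc m)
  consider "k = 0" | k' where "k = Suc k'" "k' < m" | "k = Suc m"
    using Suc.prems by (cases k) (auto simp: le_less)
  then show ?case
  proof cases
    case 1
    with Suc.IH[of 0] show ?thesis by (simp add: algebra_simps)
  next
    case 2
    then obtain d where m: "m = Suc (k' + d)"
      using less_imp_Suc_add by blast
    have "qbinom q (Suc (Suc m)) (Suc k) =
        qbinom q (Suc m) (Suc k') + q ^ Suc (Suc k') * qbinom q (Suc m) (Suc (Suc k'))"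
      by (simp only: 2 qbinom.simps(3))
    also have "\<dots> = q ^ Suc d * qbinom q m k' + qbinom q m (Suc k')
        + q ^ Suc (Suc k') * (q ^ d * qbinom q m (Suc k') + qbinom q m (Suc (Suc k')))"
      using Suc.IH[of k'] Suc.IH[of "Suc k'"] by (simp add: m)
    also have "\<dots> = q ^ Suc d * (qbinom q m k' + q ^ Suc k' * qbinom q m (Suc k'))
        + (qbinom q m (Suc k') + q ^ Suc (Suc k') * qbinom q m (Suc (Suc k')))"
      by (simp add: algebra_simps power_add)
    finally show ?thesis
      by (simp only: qbinom.simps(3) flip: 2) (simp add: 2 m)
  next
    case 3
    then show ?thesis by (simp add: qbinom_eq_0)
  qed
qed

lemma qbinom_Suc_Suc_absorb:
  assumes "k \<le> m"
  shows "qbinom q (Suc m) (Suc k) * (1 - q ^ Suc k) = (1 - q ^ Suc m) * qbinom q m k"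
proof -
  obtain d where m: "m = k + d"
    using assms le_Suc_ex by blast
  have "qbinom q (Suc m) (Suc k) * (1 - q ^ Suc k) =
      (qbinom q m k + q ^ Suc k * qbinom q m (Suc k))
      - q ^ Suc k * (q ^ d * qbinom q m k + qbinom q m (Suc k))"
    using qbinom_Suc_Suc_dual[OF assms, of q] by (simp add: m algebra_simps)
  also have "\<dots> = (1 - q ^ Suc m) * qbinom q m k"
    by (simp add: m algebra_simps power_add)
  finally show ?thesis .
qed

lemma qbinom_nonzero:
  fixes q :: "'k::field"
  assumes "\<forall>n::nat. n > 0 \<longrightarrow> q ^ n \<noteq> 1" and "i \<le> m"
  shows "qbinom q m i \<noteq> 0"
  using assms(2)
proof (induction m arbitrary: i)
  case 0
  then show ?case by simp
next
  case (Suc m)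
  show ?case
  proof (cases i)
    case (Suc k)
    with Suc.prems have "k \<le> m" by simp
    with Suc.IH assms(1) have "(1 - q ^ Suc m) * qbinom q m k \<noteq> 0" by auto
    with qbinom_Suc_Suc_absorb[OF \<open>k \<le> m\<close>] show ?thesis
      by (metis Suc mult_zero_left)
  qed simp
qed

lemma Delta_diagmap_iff:
  fixes q :: "'k::field" and \<alpha> :: "int \<times> nat \<Rightarrow> 'k"
  assumes "\<forall>n::nat. n > 0 \<longrightarrow> q ^ n \<noteq> 1"
  shows "(\<forall>h. Delta q (diagmap \<alpha> h) = tmap (diagmap \<alpha>) (diagmap \<alpha>) (Delta q h)) \<longleftrightarrow>
    (\<forall>a i j. \<alpha> (a, i + j) = \<alpha> (a, i) * \<alpha> (a + int i, j))"
proof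
  assume Delta_comm: "\<forall>h. Delta q (diagmap \<alpha> h) = tmap (diagmap \<alpha>) (diagmap \<alpha>) (Delta q h)"
  show "\<forall>a i j. \<alpha> (a, i + j) = \<alpha> (a, i) * \<alpha> (a + int i, j)"
  proof (intro allI)
    fix a i j
    have "Poly_Mapping.lookup (Delta q (diagmap \<alpha> (bas a (i + j)))) ((a, i), (a + int i, j)) =
        Poly_Mapping.lookup (tmap (diagmap \<alpha>) (diagmap \<alpha>) (Delta q (bas a (i + j)))) ((a, i), (a + int i, j))"
      using Delta_comm by simp
    then have "qbinom q (i + j) i * \<alpha> (a, i + j) = \<alpha> (a, i) * \<alpha> (a + int i, j) * qbinom q (i + j) i"
      by (simp add: lookup_Delta lookup_tmap_diagmap bas_def)
    moreover have "qbinom q (i + j) i \<noteq> 0"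
      using qbinom_nonzero[OF assms] by simp
    ultimately show "\<alpha> (a, i + j) = \<alpha> (a, i) * \<alpha> (a + int i, j)"
      by (simp add: mult.commute)
  qed
next
  assume cocycle: "\<forall>a i j. \<alpha> (a, i + j) = \<alpha> (a, i) * \<alpha> (a + int i, j)"
  show "\<forall>h. Delta q (diagmap \<alpha> h) = tmap (diagmap \<alpha>) (diagmap \<alpha>) (Delta q h)"
  proof (intro allI poly_mapping_eqI)
    fix h and r :: "(int \<times> nat) \<times> (int \<times> nat)"
    obtain a i c j where r: "r = ((a, i), (c, j))"
      by (metis prod.collapse)
    show "Poly_Mapping.lookup (Delta q (diagmap \<alpha> h)) r =
        Poly_Mapping.lookup (tmap (diagmap \<alpha>) (diagmap \<alpha>) (Delta q h)) r"
      by (simp add: r lookup_Delta lookup_tmap_diagmap cocycle algebra_simps)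
  qed
qed

lemma linearH_diagmap: "linearH (diagmap \<alpha>)"
  unfolding linearH_def by (auto intro!: poly_mapping_eqI simp: lookup_add algebra_simps)

lemma bij_diagmap:
  assumes "\<forall>b. \<alpha> b \<noteq> (0::'k::field)"
  shows "bij (diagmap \<alpha>)"
proof (rule bijI)
  show "inj (diagmap \<alpha>)"
  proof (rule injI)
    fix u v
    assume "diagmap \<alpha> u = diagmap \<alpha> v"
    then have "\<alpha> b * Poly_Mapping.lookup u b = \<alpha> b * Poly_Mapping.lookup v b" for b
      by (metis lookup_diagmap)
    with assms show "u = v" by (intro poly_mapping_eqI) auto
  qed
  show "surj (diagmap \<alpha>)"
  proof (rule surjI)
    fix g
    show "diagmap \<alpha> (diagmap (\<lambda>b. inverse (\<alpha> b)) g) = g"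
      using assms by (intro poly_mapping_eqI) auto
  qed
qed

lemma eps_diagmap:
  assumes "\<forall>b. \<alpha> b \<noteq> (0::'k::field)" and "\<forall>n. \<alpha> (n, 0) = 1"
  shows "eps (diagmap \<alpha> h) = eps h"
proof -
  have "Poly_Mapping.keys (diagmap \<alpha> h) = Poly_Mapping.keys h"
    using assms(1) by (auto simp: in_keys_iff)
  then show ?thesis
    unfolding eps_def using assms(2) by (intro sum.cong) auto
qed

theorem lemma2p11:
  fixes q :: "'k::field" and \<alpha> :: "int \<times> nat \<Rightarrow> 'k"
  assumes "q \<noteq> 0"
    and "\<forall>n::nat. n > 0 \<longrightarrow> q ^ n \<noteq> 1"
    and "\<forall>n m. \<alpha> (n, m) \<noteq> 0"
  shows "coalg_aut q (diagmap \<alpha>) \<longleftrightarrow>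
    (\<forall>(n::int) (m::nat) (i::nat). i \<le> m \<longrightarrow> \<alpha> (n, m) = \<alpha> (n, i) * \<alpha> (n + int i, m - i))"
proof -
  have nonzero: "\<forall>b. \<alpha> b \<noteq> 0"
    using assms(3) by simp
  have split_form: "(\<forall>n m i. i \<le> m \<longrightarrow> \<alpha> (n, m) = \<alpha> (n, i) * \<alpha> (n + int i, m - i)) \<longleftrightarrow>
      (\<forall>a i j. \<alpha> (a, i + j) = \<alpha> (a, i) * \<alpha> (a + int i, j))"
    by (metis add_diff_cancel_left' le_add1 le_add_diff_inverse)
  have "\<alpha> (n, 0) = 1" if "\<forall>a i j. \<alpha> (a, i + j) = \<alpha> (a, i) * \<alpha> (a + int i, j)" for n
    using that[rule_format, of n 0 0] nonzero by (metis add_0 mult_cancel_left1 of_nat_0 add_0_right)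
  then show ?thesis
    unfolding coalg_aut_def split_form Delta_diagmap_iff[OF assms(2), symmetric]
    using linearH_diagmap bij_diagmap[OF nonzero] eps_diagmap[OF nonzero] by blast
qed

end
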